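(* For each $t\ge0$ there exists $\pi^*\in\mathcal{FG}$ such that $V_{\pi^*}(t)=\sup_{\pi\in\mathcal{FG}}V_\pi(t)$.
   Context: $n\ge2$; $\Delta_n$, $\overline{\Delta}_n$ open and closed unit simplices. The market is a sequence $\{\mu(t)\}_{t\ge0}\subset\Delta_n$ with $\frac1M\le\mu_i(t+1)/\mu_i(t)\le M$ for a constant $M>0$. Relative value: $V_\pi(0)=1$, $V_\pi(t+1)=V_\pi(t)\sum_i\pi_i(\mu(t))\mu_i(t+1)/\mu_i(t)$. $\mathcal{FG}$ is the set of maps $\pi:\Delta_n\to\overline{\Delta}_n$ for which there is a concave $\Phi:\Delta_n\to(0,\infty)$ with $\sum_i\pi_i(p)\frac{q_i}{p_i}\ge\frac{\Phi(q)}{\Phi(p)}$ for all $p,q\in\Delta_n$. *)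

theory Defs
  imports "HOL-Analysis.Analysis"
begin

text \<open>Vectors in R^n are functions nat => real, with coordinates i < n relevant;
  points of the simplices are required to vanish outside {..<n}.\<close>

definition open_simplex :: "nat \<Rightarrow> (nat \<Rightarrow> real) set" where
  "open_simplex n = {p. (\<forall>i<n. 0 < p i) \<and> (\<forall>i\<ge>n. p i = 0) \<and> (\<Sum>i<n. p i) = 1}"

definition closed_simplex :: "nat \<Rightarrow> (nat \<Rightarrow> real) set" where
  "closed_simplex n = {p. (\<forall>i<n. 0 \<le> p i) \<and> (\<forall>i\<ge>n. p i = 0) \<and> (\<Sum>i<n. p i) = 1}"

definition market :: "nat \<Rightarrow> real \<Rightarrow> (nat \<Rightarrow> nat \<Rightarrow> real) \<Rightarrow> bool" where
  "market n M mu \<longleftrightarrow> 0 < M \<and> (\<forall>t. mu t \<in> open_simplex n) \<and>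
     (\<forall>t. \<forall>i<n. 1 / M \<le> mu (Suc t) i / mu t i \<and> mu (Suc t) i / mu t i \<le> M)"

fun rel_value :: "nat \<Rightarrow> (nat \<Rightarrow> nat \<Rightarrow> real) \<Rightarrow> ((nat \<Rightarrow> real) \<Rightarrow> (nat \<Rightarrow> real))
                   \<Rightarrow> nat \<Rightarrow> real" where
  "rel_value n mu w 0 = 1"
| "rel_value n mu w (Suc t) =
     rel_value n mu w t * (\<Sum>i<n. w (mu t) i * mu (Suc t) i / mu t i)"

text \<open>Concavity on the open simplex, written out (functions nat => real carry no
  real_vector instance, so convex_on is unavailable).\<close>
definition concave_on_simplex :: "nat \<Rightarrow> ((nat \<Rightarrow> real) \<Rightarrow> real) \<Rightarrow> bool" where
  "concave_on_simplex n Phi \<longleftrightarrow>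
     (\<forall>p\<in>open_simplex n. \<forall>q\<in>open_simplex n. \<forall>a::real. 0 \<le> a \<and> a \<le> 1 \<longrightarrow>
        a * Phi p + (1 - a) * Phi q \<le> Phi (\<lambda>i. a * p i + (1 - a) * q i))"

definition FG :: "nat \<Rightarrow> ((nat \<Rightarrow> real) \<Rightarrow> (nat \<Rightarrow> real)) set" where
  "FG n = {w. (\<forall>p\<in>open_simplex n. w p \<in> closed_simplex n) \<and>
     (\<exists>Phi :: (nat \<Rightarrow> real) \<Rightarrow> real.
        concave_on_simplex n Phi \<and>
        (\<forall>p\<in>open_simplex n. 0 < Phi p) \<and>
        (\<forall>p\<in>open_simplex n. \<forall>q\<in>open_simplex n.
            (\<Sum>i<n. w p i * q i / p i) \<ge> Phi q / Phi p))}"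

end

theory Submission imports Defs begin

text \<open>The relative value at time t depends on a portfolio w only through the finitely many weight
  vectors w (mu s), s < t. Recording these together with the normalised values
  Phi (mu s) / Phi (mu 0) of a generating function gives a finite "trace", subject to finitely many
  closed consistency constraints (the defining inequality of FG at the points mu s). Conversely
  every consistent trace is realised by a functionally generated portfolio, generated by the
  minimum of the linear functions q \<mapsto> phi k * \<Sum>i. W k i * q i / mu k i. The market ratios
  bound all traces, so they form a compact set on which the value is continuous; a maximising
  trace exists and its realisation is the optimal portfolio.\<close>

lemma rel_value_eq_prod:
  "rel_value n mu w t = (\<Prod>s<t. \<Sum>i<n. w (mu s) i * mu (Suc s) i / mu s i)"
  by (induction t) (simp_all add: mult.commute)

lemma closed_simplex_coord_bounds:
  assumes "v \<in> closed_simplex n" "i < n"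
  shows "0 \<le> v i" "v i \<le> 1"
proof -
  have nonneg: "\<forall>j<n. 0 \<le> v j" and sum1: "(\<Sum>j<n. v j) = 1"
    using assms(1) unfolding closed_simplex_def by blast+
  show "0 \<le> v i" using nonneg assms(2) by blast
  have "v i \<le> (\<Sum>j<n. v j)"
    by (rule member_le_sum) (use nonneg assms(2) in auto)
  then show "v i \<le> 1" using sum1 by simp
qed

lemma sum_weighted_ratio_le:
  assumes "p \<in> open_simplex n" "q \<in> open_simplex n" "v \<in> closed_simplex n"
  shows "(\<Sum>i<n. v i * q i / p i) \<le> (\<Sum>i<n. q i / p i)"
proof (rule sum_mono)
  fix i assume i: "i \<in> {..<n}"
  have "0 \<le> q i / p i" using assms(1,2) i unfolding open_simplex_def by (auto intro: less_imp_le)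
  then have "v i * (q i / p i) \<le> 1 * (q i / p i)"
    using closed_simplex_coord_bounds(2)[OF assms(3)] i by (intro mult_right_mono) auto
  then show "v i * q i / p i \<le> q i / p i" by simp
qed

lemma market_portfolio_in_FG: "(\<lambda>p. p) \<in> FG n"
  unfolding FG_def
proof (intro CollectI conjI ballI exI[of _ "\<lambda>_. 1"])
  show "p \<in> closed_simplex n" if "p \<in> open_simplex n" for p :: "nat \<Rightarrow> real"
    using that by (auto simp: open_simplex_def closed_simplex_def less_imp_le)
  show "concave_on_simplex n (\<lambda>_. 1)" by (simp add: concave_on_simplex_def)
  fix p q :: "nat \<Rightarrow> real" assume p: "p \<in> open_simplex n" and q: "q \<in> open_simplex n"
  have "(\<Sum>i<n. p i * q i / p i) = (\<Sum>i<n. q i)"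
    using p by (intro sum.cong) (auto simp: open_simplex_def)
  then show "1 / 1 \<le> (\<Sum>i<n. p i * q i / p i)" using q by (simp add: open_simplex_def)
qed (simp_all)

subsection \<open>Portfolios generated by a minimum of linear functions\<close>

lemma concave_on_simplex_linear: "concave_on_simplex n (\<lambda>q. \<Sum>i<n. c i * q i)"
  unfolding concave_on_simplex_def distrib_left sum.distrib
  by (simp add: sum_distrib_left mult.left_commute)

lemma concave_on_simplex_Min:
  assumes "finite K" "K \<noteq> {}" "\<And>k. k \<in> K \<Longrightarrow> concave_on_simplex n (f k)"
  shows "concave_on_simplex n (\<lambda>q. Min ((\<lambda>k. f k q) ` K))"
  unfolding concave_on_simplex_def
proof (intro ballI allI impI)
  fix p q and a :: real assume p: "p \<in> open_simplex n" and q: "q \<in> open_simplex n"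
    and a: "0 \<le> a \<and> a \<le> 1"
  show "a * Min ((\<lambda>k. f k p) ` K) + (1 - a) * Min ((\<lambda>k. f k q) ` K)
        \<le> Min ((\<lambda>k. f k (\<lambda>i. a * p i + (1 - a) * q i)) ` K)"
  proof (rule Min.boundedI, use assms(1,2) in simp_all, clarify)
    fix k assume k: "k \<in> K"
    have "a * Min ((\<lambda>k. f k p) ` K) \<le> a * f k p"
      using a k assms(1) by (intro mult_left_mono Min_le) auto
    moreover have "(1 - a) * Min ((\<lambda>k. f k q) ` K) \<le> (1 - a) * f k q"
      using a k assms(1) by (intro mult_left_mono Min_le) auto
    moreover have "a * f k p + (1 - a) * f k q \<le> f k (\<lambda>i. a * p i + (1 - a) * q i)"
      using assms(3)[OF k] p q a unfolding concave_on_simplex_def by blast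
    ultimately show "a * Min ((\<lambda>k. f k p) ` K) + (1 - a) * Min ((\<lambda>k. f k q) ` K)
        \<le> f k (\<lambda>i. a * p i + (1 - a) * q i)" by linarith
  qed
qed

lemma FG_weights_at_touching_point:
  assumes p: "p \<in> open_simplex n" and c_nonneg: "\<forall>i<n. 0 \<le> c i"
    and dominates: "\<forall>q\<in>open_simplex n. Phi q \<le> (\<Sum>i<n. c i * q i)"
    and touches: "Phi p = (\<Sum>i<n. c i * p i)" and Phi_pos: "0 < Phi p"
  defines "v \<equiv> \<lambda>i. if i < n then c i * p i / Phi p else 0"
  shows "v \<in> closed_simplex n" "\<forall>q\<in>open_simplex n. Phi q / Phi p \<le> (\<Sum>i<n. v i * q i / p i)"
proof -
  have p_pos: "\<forall>i<n. 0 < p i" using p by (simp add: open_simplex_def)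
  have ratio_sum: "(\<Sum>i<n. v i * q i / p i) = (\<Sum>i<n. c i * q i) / Phi p" for q
    unfolding sum_divide_distrib using p_pos by (intro sum.cong) (auto simp: v_def)
  have "(\<Sum>i<n. v i) = (\<Sum>i<n. v i * p i / p i)" using p_pos by (intro sum.cong) auto
  also have "\<dots> = 1" using ratio_sum[of p] touches Phi_pos by simp
  finally show "v \<in> closed_simplex n"
    using c_nonneg p_pos Phi_pos by (auto simp: closed_simplex_def v_def less_imp_le)
  show "\<forall>q\<in>open_simplex n. Phi q / Phi p \<le> (\<Sum>i<n. v i * q i / p i)"
    using dominates Phi_pos by (simp add: ratio_sum divide_right_mono)
qed

lemma Min_linear_concave_pos:
  fixes c :: "'k \<Rightarrow> nat \<Rightarrow> real"
  assumes "finite K" "K \<noteq> {}" and c_nonneg: "\<And>k i. k \<in> K \<Longrightarrow> i < n \<Longrightarrow> 0 \<le> c k i"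
    and c_pos: "\<And>k. k \<in> K \<Longrightarrow> \<exists>i<n. 0 < c k i"
  defines "Phi \<equiv> \<lambda>q. Min ((\<lambda>k. \<Sum>i<n. c k i * q i) ` K)"
  shows "concave_on_simplex n Phi" "\<And>q. q \<in> open_simplex n \<Longrightarrow> 0 < Phi q"
proof -
  show "concave_on_simplex n Phi"
    unfolding Phi_def using assms(1,2) by (intro concave_on_simplex_Min concave_on_simplex_linear)
  fix q assume q: "q \<in> open_simplex n"
  have "0 < (\<Sum>i<n. c k i * q i)" if k: "k \<in> K" for k
  proof -
    obtain j where "j < n" "0 < c k j" using c_pos[OF k] by blast
    then show ?thesis using c_nonneg[OF k] q
      by (intro sum_pos2[of _ j]) (auto simp: open_simplex_def less_imp_le)
  qed
  then show "0 < Phi q" unfolding Phi_def using assms(1,2) by (simp add: Min_gr_iff)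
qed

lemma FG_of_touching_selection:
  assumes concave: "concave_on_simplex n Phi" and Phi_pos: "\<And>p. p \<in> open_simplex n \<Longrightarrow> 0 < Phi p"
    and c_nonneg: "\<And>p i. p \<in> open_simplex n \<Longrightarrow> i < n \<Longrightarrow> 0 \<le> c (sel p) i"
    and dominates: "\<And>p q. p \<in> open_simplex n \<Longrightarrow> q \<in> open_simplex n \<Longrightarrow> Phi q \<le> (\<Sum>i<n. c (sel p) i * q i)"
    and touches: "\<And>p. p \<in> open_simplex n \<Longrightarrow> Phi p = (\<Sum>i<n. c (sel p) i * p i)"
  shows "(\<lambda>p i. if i < n then c (sel p) i * p i / Phi p else 0) \<in> FG n"
  unfolding FG_def
proof (intro CollectI conjI ballI exI[of _ Phi])
  fix p assume p: "p \<in> open_simplex n"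
  have "\<forall>i<n. 0 \<le> c (sel p) i" "\<forall>q\<in>open_simplex n. Phi q \<le> (\<Sum>i<n. c (sel p) i * q i)"
    using c_nonneg[OF p] dominates[OF p] by auto
  note weights = FG_weights_at_touching_point[OF p this touches[OF p] Phi_pos[OF p]]
  show "(\<lambda>i. if i < n then c (sel p) i * p i / Phi p else 0) \<in> closed_simplex n"
    "\<And>q. q \<in> open_simplex n \<Longrightarrow>
       Phi q / Phi p \<le> (\<Sum>i<n. (if i < n then c (sel p) i * p i / Phi p else 0) * q i / p i)"
    using weights by auto
qed (use concave Phi_pos in auto)

lemma FG_Min_linear_interpolation:
  fixes c x :: "nat \<Rightarrow> nat \<Rightarrow> real"
  assumes "0 < t" and c_nonneg: "\<And>k i. k < t \<Longrightarrow> i < n \<Longrightarrow> 0 \<le> c k i"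
    and c_pos: "\<And>k. k < t \<Longrightarrow> \<exists>i<n. 0 < c k i"
    and touches: "\<And>k. k < t \<Longrightarrow> Min ((\<lambda>l. \<Sum>i<n. c l i * x k i) ` {..<t}) = (\<Sum>i<n. c k i * x k i)"
  shows "\<exists>w\<in>FG n. \<forall>k<t. \<exists>l<t. x l = x k \<and>
           (\<forall>i<n. w (x k) i = c l i * x k i / (\<Sum>j<n. c l j * x k j))"
proof -
  define Phi where "Phi q = Min ((\<lambda>k. \<Sum>i<n. c k i * q i) ` {..<t})" for q
  have pieces: "{..<t} \<noteq> {}" using \<open>0 < t\<close> by auto
  have concave: "concave_on_simplex n Phi"
    using Min_linear_concave_pos(1)[of "{..<t}" n c] pieces unfolding Phi_def
    by (simp add: c_nonneg c_pos)
  have Phi_pos: "0 < Phi q" if "q \<in> open_simplex n" for q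
    using Min_linear_concave_pos(2)[of "{..<t}" n c q] pieces that unfolding Phi_def
    by (simp add: c_nonneg c_pos)
  have Phi_le: "Phi q \<le> (\<Sum>i<n. c k i * q i)" if "k < t" for k q
    unfolding Phi_def using that by (intro Min_le) auto
  have Phi_attained: "\<exists>k<t. Phi q = (\<Sum>i<n. c k i * q i)" for q
  proof -
    have "Phi q \<in> (\<lambda>k. \<Sum>i<n. c k i * q i) ` {..<t}"
      unfolding Phi_def using pieces by (intro Min_in) auto
    then show ?thesis by auto
  qed
  text \<open>At a point x k the chosen touching piece belongs to a point equal to x k, which is what
    makes the weights there computable.\<close>
  define touching where "touching p k \<longleftrightarrow> k < t \<and> Phi p = (\<Sum>i<n. c k i * p i) \<and>
      (p \<in> x ` {..<t} \<longrightarrow> p = x k)" for p k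
  have touching_sel: "touching p (SOME k. touching p k)" for p
  proof (rule someI_ex, cases "p \<in> x ` {..<t}")
    case True
    then obtain k where "k < t" "p = x k" by blast
    then show "\<exists>k. touching p k" using touches unfolding touching_def Phi_def by blast
  next
    case False then show "\<exists>k. touching p k" using Phi_attained unfolding touching_def by blast
  qed
  define w where "w p i = (if i < n then c (SOME k. touching p k) i * p i / Phi p else 0)" for p i
  have "w \<in> FG n"
    unfolding w_def using concave Phi_pos
  proof (rule FG_of_touching_selection)
    show "0 \<le> c (SOME k. touching p k) i" if "i < n" for p i
      using touching_sel[of p] c_nonneg that unfolding touching_def by auto
    show "Phi q \<le> (\<Sum>i<n. c (SOME k. touching p k) i * q i)"
      "Phi p = (\<Sum>i<n. c (SOME k. touching p k) i * p i)" for p q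
      using touching_sel[of p] Phi_le unfolding touching_def by auto
  qed
  moreover have "\<exists>l<t. x l = x k \<and> (\<forall>i<n. w (x k) i = c l i * x k i / (\<Sum>j<n. c l j * x k j))"
    if "k < t" for k
  proof -
    let ?l = "SOME l. touching (x k) l"
    have "?l < t" "x ?l = x k" "Phi (x k) = (\<Sum>j<n. c ?l j * x k j)"
      using touching_sel[of "x k"] that unfolding touching_def by auto
    then show ?thesis by (intro exI[of _ ?l]) (simp add: w_def)
  qed
  ultimately show ?thesis by blast
qed

lemma FG_interpolation:
  fixes mu W :: "nat \<Rightarrow> nat \<Rightarrow> real" and phi :: "nat \<Rightarrow> real"
  assumes "0 < t" and mu: "\<And>s. mu s \<in> open_simplex n"
    and W_nonneg: "\<And>k i. k < t \<Longrightarrow> i < n \<Longrightarrow> 0 \<le> W k i"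
    and W_sum: "\<And>k. k < t \<Longrightarrow> (\<Sum>i<n. W k i) = 1"
    and phi_pos: "\<And>k. k < t \<Longrightarrow> 0 < phi k"
    and consistent: "\<And>k l. k < t \<Longrightarrow> l < t \<Longrightarrow> phi l \<le> phi k * (\<Sum>i<n. W k i * mu l i / mu k i)"
    and same: "\<And>k l i. k < t \<Longrightarrow> l < t \<Longrightarrow> mu k = mu l \<Longrightarrow> i < n \<Longrightarrow> W k i = W l i"
  shows "\<exists>w\<in>FG n. \<forall>s<t. \<forall>i<n. w (mu s) i = W s i"
proof -
  define c where "c k i = phi k * W k i / mu k i" for k i
  have mu_pos: "0 < mu k i" if "i < n" for k i using mu[of k] that by (simp add: open_simplex_def)
  have c_nonneg: "0 \<le> c k i" if "k < t" "i < n" for k i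
    using W_nonneg phi_pos that mu_pos by (simp add: c_def less_imp_le)
  have c_pos: "\<exists>i<n. 0 < c k i" if k: "k < t" for k
  proof -
    obtain i where i: "i < n" "W k i \<noteq> 0"
      using W_sum[OF k] by (metis lessThan_iff sum.neutral zero_neq_one)
    then have "0 < W k i" using W_nonneg[OF k] by (simp add: less_le)
    then show ?thesis using i phi_pos[OF k] mu_pos[of i k] by (auto simp: c_def)
  qed
  have piece_at_own_data: "(\<Sum>i<n. c k i * mu k i) = phi k" if "k < t" for k
  proof -
    have "(\<Sum>i<n. c k i * mu k i) = (\<Sum>i<n. phi k * W k i)"
      using mu_pos by (intro sum.cong) (auto simp: c_def less_imp_neq[THEN not_sym])
    also have "\<dots> = phi k" using W_sum[OF that] by (simp add: sum_distrib_left[symmetric])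
    finally show ?thesis .
  qed
  have touches: "Min ((\<lambda>l. \<Sum>i<n. c l i * mu k i) ` {..<t}) = (\<Sum>i<n. c k i * mu k i)"
    if k: "k < t" for k
  proof (rule antisym)
    show "Min ((\<lambda>l. \<Sum>i<n. c l i * mu k i) ` {..<t}) \<le> (\<Sum>i<n. c k i * mu k i)"
      using k by (intro Min_le) auto
    have "(\<Sum>i<n. c l i * mu k i) = phi l * (\<Sum>i<n. W l i * mu k i / mu l i)" for l
      unfolding sum_distrib_left c_def by (intro sum.cong) auto
    then show "(\<Sum>i<n. c k i * mu k i) \<le> Min ((\<lambda>l. \<Sum>i<n. c l i * mu k i) ` {..<t})"
      unfolding piece_at_own_data[OF k] using k consistent by (intro Min.boundedI) auto
  qed
  obtain w where "w \<in> FG n"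
    and w: "\<And>s. s < t \<Longrightarrow> \<exists>l<t. mu l = mu s \<and>
                 (\<forall>i<n. w (mu s) i = c l i * mu s i / (\<Sum>j<n. c l j * mu s j))"
    using FG_Min_linear_interpolation[OF \<open>0 < t\<close> c_nonneg c_pos touches] by blast
  moreover have "w (mu s) i = W s i" if s: "s < t" and i: "i < n" for s i
  proof -
    obtain l where l: "l < t" "mu l = mu s"
      and "w (mu s) i = c l i * mu l i / (\<Sum>j<n. c l j * mu l j)"
      using w[OF s] i by metis
    then have "w (mu s) i = W l i"
      using i piece_at_own_data[of l] phi_pos[of l] mu_pos[of i l] by (simp add: c_def)
    then show ?thesis using same[OF l(1) s l(2) i] by simp
  qed
  ultimately show ?thesis by blast
qed

subsection \<open>Traces of portfolios\<close>

text \<open>A trace X records, for s < t, the weights X s i (i < n) at mu s and in the extra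
  coordinate X s n the value of a generating function at mu s, up to a common factor.\<close>

definition consistent_trace :: "nat \<Rightarrow> (nat \<Rightarrow> nat \<Rightarrow> real) \<Rightarrow> nat \<Rightarrow> (nat \<Rightarrow> nat \<Rightarrow> real) \<Rightarrow> bool" where
  "consistent_trace n mu t X \<longleftrightarrow> (\<forall>k<t. \<forall>l<t. (\<Sum>i<n. X k i) = 1 \<and>
     X l n \<le> X k n * (\<Sum>i<n. X k i * mu l i / mu k i) \<and> (mu k = mu l \<longrightarrow> X k = X l))"

definition trace_box :: "nat \<Rightarrow> nat \<Rightarrow> real \<Rightarrow> (nat \<Rightarrow> nat \<Rightarrow> real) set" where
  "trace_box n t B = {X. (\<forall>s<t. (\<forall>i<n. 0 \<le> X s i \<and> X s i \<le> 1) \<and> 1 / B \<le> X s n \<and> X s n \<le> B) \<and>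
     (\<forall>s i. t \<le> s \<or> n < i \<longrightarrow> X s i = 0)}"

definition trace_value :: "nat \<Rightarrow> (nat \<Rightarrow> nat \<Rightarrow> real) \<Rightarrow> nat \<Rightarrow> (nat \<Rightarrow> nat \<Rightarrow> real) \<Rightarrow> real" where
  "trace_value n mu t X = (\<Prod>s<t. \<Sum>i<n. X s i * mu (Suc s) i / mu s i)"

definition ratio_bound :: "nat \<Rightarrow> (nat \<Rightarrow> nat \<Rightarrow> real) \<Rightarrow> nat \<Rightarrow> real" where
  "ratio_bound n mu t = 1 + (\<Sum>s<t. \<Sum>s'<t. \<Sum>i<n. mu s i / mu s' i)"

lemma sum_ratio_nonneg:
  assumes "p \<in> open_simplex n" "q \<in> open_simplex n"
  shows "0 \<le> (\<Sum>i<n. q i / p i)"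
  using assms by (intro sum_nonneg) (auto simp: open_simplex_def less_imp_le)

lemma one_le_ratio_bound:
  assumes "\<And>s. mu s \<in> open_simplex n"
  shows "1 \<le> ratio_bound n mu t"
  unfolding ratio_bound_def using sum_ratio_nonneg[OF assms assms] by (simp add: sum_nonneg)

lemma sum_ratio_le_ratio_bound:
  assumes mu: "\<And>s. mu s \<in> open_simplex n" and "s < t" "s' < t"
  shows "(\<Sum>i<n. mu s i / mu s' i) \<le> ratio_bound n mu t"
proof -
  let ?R = "\<lambda>s s'. \<Sum>i<n. mu s i / mu s' i"
  have "?R s s' \<le> (\<Sum>s'<t. ?R s s')"
    using assms sum_ratio_nonneg[OF mu mu] by (intro member_le_sum) auto
  also have "\<dots> \<le> (\<Sum>s<t. \<Sum>s'<t. ?R s s')"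
    using assms sum_ratio_nonneg[OF mu mu]
    by (intro member_le_sum[where f = "\<lambda>s. \<Sum>s'<t. ?R s s'"]) (auto intro: sum_nonneg)
  finally show ?thesis unfolding ratio_bound_def by simp
qed

lemma FG_trace:
  assumes w: "w \<in> FG n" and "0 < t" and mu: "\<And>s. mu s \<in> open_simplex n"
  shows "\<exists>X\<in>trace_box n t (ratio_bound n mu t). consistent_trace n mu t X \<and>
           trace_value n mu t X = rel_value n mu w t"
proof -
  let ?B = "ratio_bound n mu t"
  obtain Phi where w_simplex: "\<And>p. p \<in> open_simplex n \<Longrightarrow> w p \<in> closed_simplex n"
    and Phi_pos: "\<And>p. p \<in> open_simplex n \<Longrightarrow> 0 < Phi p"
    and FG_ineq: "\<And>p q. p \<in> open_simplex n \<Longrightarrow> q \<in> open_simplex n \<Longrightarrow>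
                    Phi q / Phi p \<le> (\<Sum>i<n. w p i * q i / p i)"
    using w unfolding FG_def by blast
  define X where "X s i = (if s < t \<and> i < n then w (mu s) i
      else if s < t \<and> i = n then Phi (mu s) / Phi (mu 0) else 0)" for s i
  have Phi_ratio: "Phi (mu l) / Phi (mu k) \<le> ?B" if "k < t" "l < t" for k l
    using FG_ineq[OF mu[of k] mu[of l]] sum_weighted_ratio_le[OF mu[of k] mu[of l] w_simplex[OF mu[of k]]]
      sum_ratio_le_ratio_bound[where mu = mu, OF mu that(2,1)] by linarith
  have "X \<in> trace_box n t ?B"
    unfolding trace_box_def
  proof (intro CollectI conjI allI impI)
    fix s assume s: "s < t"
    have pos: "0 < Phi (mu 0)" "0 < Phi (mu s)" using Phi_pos mu by auto
    show "0 \<le> X s i" "X s i \<le> 1" if "i < n" for i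
      using s that closed_simplex_coord_bounds[OF w_simplex[OF mu]] by (simp_all add: X_def)
    show "X s n \<le> ?B" using Phi_ratio[of 0 s] s \<open>0 < t\<close> by (simp add: X_def)
    have "Phi (mu 0) \<le> ?B * Phi (mu s)"
      using Phi_ratio[of s 0] s \<open>0 < t\<close> pos by (simp add: divide_le_eq)
    moreover have "0 < ?B" using one_le_ratio_bound[where mu = mu and t = t, OF mu] by linarith
    ultimately show "1 / ?B \<le> X s n" using s pos by (simp add: X_def field_simps)
  qed (auto simp: X_def)
  moreover have "consistent_trace n mu t X"
    unfolding consistent_trace_def
  proof (intro allI impI conjI)
    fix k l assume k: "k < t" and l: "l < t"
    show "(\<Sum>i<n. X k i) = 1" using k w_simplex[OF mu] by (simp add: X_def closed_simplex_def)
    have pos: "0 < Phi (mu 0)" "0 < Phi (mu k)" using Phi_pos mu by auto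
    have "X l n = Phi (mu k) / Phi (mu 0) * (Phi (mu l) / Phi (mu k))" using l pos by (simp add: X_def)
    also have "\<dots> \<le> Phi (mu k) / Phi (mu 0) * (\<Sum>i<n. w (mu k) i * mu l i / mu k i)"
      using pos FG_ineq[OF mu mu] by (intro mult_left_mono) auto
    also have "\<dots> = X k n * (\<Sum>i<n. X k i * mu l i / mu k i)" using k by (simp add: X_def)
    finally show "X l n \<le> X k n * (\<Sum>i<n. X k i * mu l i / mu k i)" .
    show "mu k = mu l \<Longrightarrow> X k = X l" using k l by (intro ext) (simp add: X_def)
  qed
  moreover have "trace_value n mu t X = rel_value n mu w t"
    unfolding rel_value_eq_prod trace_value_def by (intro prod.cong sum.cong) (auto simp: X_def)
  ultimately show ?thesis by blast
qed

lemma FG_of_trace: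
  assumes box: "X \<in> trace_box n t B" and consistent: "consistent_trace n mu t X"
    and "0 < t" "1 \<le> B" and mu: "\<And>s. mu s \<in> open_simplex n"
  shows "\<exists>w\<in>FG n. rel_value n mu w t = trace_value n mu t X"
proof -
  have "\<exists>w\<in>FG n. \<forall>s<t. \<forall>i<n. w (mu s) i = X s i"
  proof (rule FG_interpolation[where mu = mu and W = X and phi = "\<lambda>s. X s n", OF \<open>0 < t\<close> mu])
    fix k l i assume k: "k < t" and l: "l < t"
    show "0 \<le> X k i" if "i < n" using box k that unfolding trace_box_def by blast
    have "1 / B \<le> X k n" using box k unfolding trace_box_def by blast
    moreover have "0 < 1 / B" using \<open>1 \<le> B\<close> by simp
    ultimately show "0 < X k n" by linarith
    show "(\<Sum>i<n. X k i) = 1" "X l n \<le> X k n * (\<Sum>i<n. X k i * mu l i / mu k i)"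
      using consistent k l unfolding consistent_trace_def by blast+
    show "X k i = X l i" if "mu k = mu l"
      using consistent k l that unfolding consistent_trace_def by metis
  qed
  then obtain w where "w \<in> FG n" "\<And>s i. s < t \<Longrightarrow> i < n \<Longrightarrow> w (mu s) i = X s i" by blast
  moreover from this(2) have "rel_value n mu w t = trace_value n mu t X"
    unfolding rel_value_eq_prod trace_value_def by (intro prod.cong sum.cong) auto
  ultimately show ?thesis by blast
qed

subsection \<open>Compactness of the set of traces\<close>

lemma compact_coordinatewise_box:
  "compact {X :: 'a \<Rightarrow> 'b \<Rightarrow> real. \<forall>s i. lo s i \<le> X s i \<and> X s i \<le> hi s i}"
proof -
  have "compact (PiE UNIV (\<lambda>i. {lo s i..hi s i}))" for s
    using compactin_PiE[of "\<lambda>_. euclidean" UNIV "\<lambda>i. {lo s i..hi s i}"]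
    by (simp add: euclidean_product_topology)
  then have "compactin (product_topology (\<lambda>_. euclidean) UNIV)
          (PiE UNIV (\<lambda>s. PiE UNIV (\<lambda>i. {lo s i..hi s i})))"
    by (simp add: compactin_PiE)
  moreover have "PiE UNIV (\<lambda>s. PiE UNIV (\<lambda>i. {lo s i..hi s i}))
                 = {X :: 'a \<Rightarrow> 'b \<Rightarrow> real. \<forall>s i. lo s i \<le> X s i \<and> X s i \<le> hi s i}"
    by (auto simp: PiE_iff)
  ultimately show ?thesis by (simp add: euclidean_product_topology)
qed

lemma continuous_on_coordinate[continuous_intros]:
  "continuous_on A (\<lambda>X :: 'a \<Rightarrow> 'b \<Rightarrow> real. X s i)"
proof -
  have "continuous_on UNIV (\<lambda>X :: 'a \<Rightarrow> 'b \<Rightarrow> real. X s i)"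
    by (rule continuous_on_product_then_coordinatewise) simp
  then show ?thesis by (rule continuous_on_subset) auto
qed

lemma compact_trace_box: "compact (trace_box n t B)"
proof -
  define lo where "lo s i = (if s < t \<and> i = n then 1 / B else 0)" for s i
  define hi where "hi s i = (if s < t \<and> i < n then 1 else if s < t \<and> i = n then B else 0)" for s i
  have "trace_box n t B = {X. \<forall>s i. lo s i \<le> X s i \<and> X s i \<le> hi s i}"
  proof (intro set_eqI iffI)
    fix X assume "X \<in> trace_box n t B"
    then show "X \<in> {X. \<forall>s i. lo s i \<le> X s i \<and> X s i \<le> hi s i}"
      unfolding trace_box_def lo_def hi_def by (auto simp: not_le not_less)
  next
    fix X assume "X \<in> {X. \<forall>s i. lo s i \<le> X s i \<and> X s i \<le> hi s i}"
    then have bounds: "lo s i \<le> X s i \<and> X s i \<le> hi s i" for s i by blast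
    show "X \<in> trace_box n t B"
      unfolding trace_box_def
    proof (intro CollectI conjI allI impI)
      fix s i
      show "0 \<le> X s i" "X s i \<le> 1" if "s < t" "i < n"
        using bounds[of s i] that by (simp_all add: lo_def hi_def)
      show "1 / B \<le> X s n" "X s n \<le> B" if "s < t"
        using bounds[of s n] that by (simp_all add: lo_def hi_def)
      show "X s i = 0" if "t \<le> s \<or> n < i"
        using bounds[of s i] that by (auto simp: lo_def hi_def)
    qed
  qed
  then show ?thesis using compact_coordinatewise_box by simp
qed

lemma closed_consistent_traces:
  assumes "\<And>s. mu s \<in> open_simplex n"
  shows "closed {X. consistent_trace n mu t X}"
proof -
  have "mu s i \<noteq> 0" if "i < n" for s i using assms[of s] that by (auto simp: open_simplex_def)
  moreover have "continuous_on UNIV (\<lambda>X :: nat \<Rightarrow> nat \<Rightarrow> real. X s)" for s by simp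
  ultimately show ?thesis
    unfolding consistent_trace_def
    by (intro closed_Collect_all closed_Collect_imp closed_Collect_conj open_Collect_const
          closed_Collect_eq closed_Collect_le continuous_intros) auto
qed

lemma continuous_on_trace_value:
  assumes "\<And>s. mu s \<in> open_simplex n"
  shows "continuous_on A (trace_value n mu t)"
proof -
  have "mu s i \<noteq> 0" if "i < n" for s i using assms[of s] that by (auto simp: open_simplex_def)
  then show ?thesis unfolding trace_value_def by (intro continuous_intros) auto
qed

lemma FG_value_maximum:
  assumes "0 < t" and mu: "\<And>s. mu s \<in> open_simplex n"
  shows "\<exists>wstar\<in>FG n. \<forall>w\<in>FG n. rel_value n mu w t \<le> rel_value n mu wstar t"
proof -
  define T where "T = trace_box n t (ratio_bound n mu t) \<inter> {X. consistent_trace n mu t X}"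
  have traces: "\<exists>X\<in>T. trace_value n mu t X = rel_value n mu w t" if "w \<in> FG n" for w
    using FG_trace[where mu = mu, OF that \<open>0 < t\<close> mu] unfolding T_def by blast
  have "compact T"
    unfolding T_def using compact_trace_box closed_consistent_traces[where mu = mu, OF mu]
    by (rule compact_Int_closed)
  moreover have "T \<noteq> {}" using traces[OF market_portfolio_in_FG] by blast
  ultimately obtain Xmax where Xmax: "Xmax \<in> T"
    and maximal: "\<forall>X\<in>T. trace_value n mu t X \<le> trace_value n mu t Xmax"
    using continuous_attains_sup[OF _ _ continuous_on_trace_value[where mu = mu, OF mu]] by blast
  from Xmax have "Xmax \<in> trace_box n t (ratio_bound n mu t)" "consistent_trace n mu t Xmax"
    unfolding T_def by blast+
  from FG_of_trace[OF this \<open>0 < t\<close> one_le_ratio_bound[where mu = mu, OF mu] mu]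
  obtain wstar where "wstar \<in> FG n" and wstar: "rel_value n mu wstar t = trace_value n mu t Xmax"
    by blast
  moreover have "rel_value n mu w t \<le> rel_value n mu wstar t" if "w \<in> FG n" for w
    using traces[OF that] maximal wstar by fastforce
  ultimately show ?thesis by blast
qed

theorem lemma4p5:
  fixes n :: nat and M :: real and mu :: "nat \<Rightarrow> nat \<Rightarrow> real" and t :: nat
  assumes "n \<ge> 2" and "market n M mu"
  shows "\<exists>wstar\<in>FG n. (\<forall>w\<in>FG n. rel_value n mu w t \<le> rel_value n mu wstar t) \<and>
           rel_value n mu wstar t = (SUP w\<in>FG n. rel_value n mu w t)"
proof -
  have mu: "\<And>s. mu s \<in> open_simplex n" using assms(2) by (simp add: market_def)
  obtain wstar where "wstar \<in> FG n" "\<forall>w\<in>FG n. rel_value n mu w t \<le> rel_value n mu wstar t"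
  proof (cases "t = 0")
    case True
    then show ?thesis using that market_portfolio_in_FG by auto
  next
    case False
    then show ?thesis using that FG_value_maximum[where mu = mu, OF _ mu] by blast
  qed
  moreover from this have "(SUP w\<in>FG n. rel_value n mu w t) = rel_value n mu wstar t"
    by (intro cSup_eq_maximum) auto
  ultimately show ?thesis by auto
qed

end
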